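(* Let $O\in\{\mathrm{LimInf}(=-\infty),\mathrm{LimInf}(>-\infty),\mathrm{LimInf}(=+\infty),\mathrm{LimInf}(<+\infty)\}$ and let $\mathcal{G}$ be a finite maximizing MDP with reward function $r:V\to\{-1,0,1\}$. Let $W=\{s\in V\mid \mathrm{Val}^O(s)=1\}$. Then $\mathrm{Val}^O(s)=\mathrm{Val}^{\mathrm{Reach}(W)}(s)$ for every state $s$.
   Context: A maximizing MDP is a finite directed graph $(V,\to)$, every vertex with a successor, with states partitioned into states of player Max and random states (with rational probability distributions on outgoing edges). $\mathbb{P}^\sigma_s$ is the measure on runs from $s$ under Max strategy $\sigma$, and $\mathrm{Val}^O(s)=\sup_\sigma\mathbb{P}^\sigma_s(O)$. For $\Delta\in\{=,>,<\}$, $z\in\{\pm\infty\}$: $\mathrm{LimInf}(\Delta z)=\{w\mid \liminf_{n}\sum_{i=0}^n r(w(i))\ \Delta\ z\}$. $\mathrm{Reach}(W)=\{w\mid\exists i\ge0: w(i)\in W\}$. *)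

theory Defs
  imports "HOL-Probability.Probability"
begin

text \<open>A finite maximizing MDP: vertices are the elements of the finite type 'v,
  E is the edge relation, VM the states of player Max (all other states are random),
  P s the (rational) distribution on the successors of a random state s.\<close>

definition mdp :: "('v::finite \<times> 'v) set \<Rightarrow> 'v set \<Rightarrow> ('v \<Rightarrow> 'v pmf) \<Rightarrow> bool" where
  "mdp E VM P \<longleftrightarrow> (\<forall>s. \<exists>t. (s, t) \<in> E) \<and>
     (\<forall>s. s \<notin> VM \<longrightarrow> set_pmf (P s) = E `` {s} \<and> (\<forall>t. pmf (P s) t \<in> \<rat>))"

definition strategy :: "('v \<times> 'v) set \<Rightarrow> 'v set \<Rightarrow> ('v list \<Rightarrow> 'v pmf) \<Rightarrow> bool" where
  "strategy E VM \<sigma> \<longleftrightarrow> (\<forall>h. h \<noteq> [] \<and> last h \<in> VM \<longrightarrow> set_pmf (\<sigma> h) \<subseteq> E `` {last h})"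

definition next_dist :: "'v set \<Rightarrow> ('v \<Rightarrow> 'v pmf) \<Rightarrow> ('v list \<Rightarrow> 'v pmf) \<Rightarrow> 'v list \<Rightarrow> 'v pmf" where
  "next_dist VM P \<sigma> h = (if last h \<in> VM then \<sigma> h else P (last h))"

text \<open>Probability of the finite path h (given it starts in the initial state).\<close>
definition path_prob :: "'v set \<Rightarrow> ('v \<Rightarrow> 'v pmf) \<Rightarrow> ('v list \<Rightarrow> 'v pmf) \<Rightarrow> 'v list \<Rightarrow> real" where
  "path_prob VM P \<sigma> h = (\<Prod>i<length h - 1. pmf (next_dist VM P \<sigma> (take (Suc i) h)) (h ! Suc i))"

definition run_measure :: "'v set \<Rightarrow> ('v \<Rightarrow> 'v pmf) \<Rightarrow> ('v list \<Rightarrow> 'v pmf) \<Rightarrow> 'v \<Rightarrow> 'v stream measure" where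
  "run_measure VM P \<sigma> s = (SOME M. sets M = sets (stream_space (count_space UNIV)) \<and> prob_space M \<and>
     (\<forall>h. h \<noteq> [] \<longrightarrow> emeasure M {\<omega> \<in> space M. stake (length h) \<omega> = h}
          = ennreal (if hd h = s then path_prob VM P \<sigma> h else 0)))"

definition Val :: "('v \<times> 'v) set \<Rightarrow> 'v set \<Rightarrow> ('v \<Rightarrow> 'v pmf) \<Rightarrow> 'v stream set \<Rightarrow> 'v \<Rightarrow> real" where
  "Val E VM P Obj s = (SUP \<sigma> \<in> {\<sigma>. strategy E VM \<sigma>}. measure (run_measure VM P \<sigma> s) Obj)"

definition LimInf :: "('v \<Rightarrow> int) \<Rightarrow> (ereal \<Rightarrow> ereal \<Rightarrow> bool) \<Rightarrow> ereal \<Rightarrow> 'v stream set" where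
  "LimInf r \<Delta> z = {w. \<Delta> (liminf (\<lambda>n. ereal (real_of_int (\<Sum>i\<le>n. r (w !! i))))) z}"

definition Reach :: "'v set \<Rightarrow> 'v stream set" where
  "Reach W = {w. \<exists>i. w !! i \<in> W}"

end

theory Submission
  imports Defs
begin

(* The theorem says that for the four liminf objectives the value of an MDP equals the value
   of reaching the set W of states of value 1.  The argument only uses two properties of such an
   objective Ob: it is measurable, and it is a tail objective (w \<in> Ob iff stl w \<in> Ob).

   Val(Ob) \<le> Val(Reach W): let c < 1 be the largest value outside W.  Every history h that has
   not visited W reaches a state of value \<le> c, so the runs in Ob that never visit W have
   probability at most c * Pr(h) inside each cylinder of h.  A measurable set with this
   uniform bound on all cylinders is null, because it can be approximated arbitrarily well by
   finite unions of cylinders.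

   Val(Reach W) \<le> Val(Ob): play any strategy until W is hit for the first time, then switch to a
   strategy that is z-optimal for Ob from the state hit; by the tail property the switched
   strategy wins Ob with probability at least z * Pr(Reach W). *)

subsection \<open>Probabilities of finite histories\<close>

text \<open>The distribution of the next state after history h; the empty history is followed by s.\<close>
definition step_dist :: "'v set \<Rightarrow> ('v \<Rightarrow> 'v pmf) \<Rightarrow> ('v list \<Rightarrow> 'v pmf) \<Rightarrow> 'v \<Rightarrow> 'v list \<Rightarrow> 'v pmf" where
  "step_dist VM P \<sigma> s h = (if h = [] then return_pmf s else next_dist VM P \<sigma> h)"

text \<open>The probability that a run from s starts with h; this is the value prescribed for the
  cylinder of h in the definition of run_measure.\<close>
definition cyl_prob :: "'v set \<Rightarrow> ('v \<Rightarrow> 'v pmf) \<Rightarrow> ('v list \<Rightarrow> 'v pmf) \<Rightarrow> 'v \<Rightarrow> 'v list \<Rightarrow> real" where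
  "cyl_prob VM P \<sigma> s h = (if h = [] then 1 else if hd h = s then path_prob VM P \<sigma> h else 0)"

lemma path_prob_single [simp]: "path_prob VM P \<sigma> [x] = 1"
  by (simp add: path_prob_def)

lemma path_prob_snoc:
  assumes "xs \<noteq> []"
  shows "path_prob VM P \<sigma> (xs @ [a]) = path_prob VM P \<sigma> xs * pmf (next_dist VM P \<sigma> xs) a"
proof -
  obtain k where k: "length xs = Suc k" using assms by (cases xs) auto
  have "path_prob VM P \<sigma> (xs @ [a]) =
      (\<Prod>i<k. pmf (next_dist VM P \<sigma> (take (Suc i) (xs @ [a]))) ((xs @ [a]) ! Suc i)) *
      pmf (next_dist VM P \<sigma> (take (Suc k) (xs @ [a]))) ((xs @ [a]) ! Suc k)"
    by (simp add: path_prob_def k)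
  also have "(\<Prod>i<k. pmf (next_dist VM P \<sigma> (take (Suc i) (xs @ [a]))) ((xs @ [a]) ! Suc i)) =
      path_prob VM P \<sigma> xs"
    unfolding path_prob_def k by (intro prod.cong) (auto simp: k nth_append)
  finally show ?thesis using k by (simp add: nth_append)
qed

lemma cyl_prob_snoc: "cyl_prob VM P \<sigma> s (h @ [a]) = cyl_prob VM P \<sigma> s h * pmf (step_dist VM P \<sigma> s h) a"
  by (cases "h = []") (auto simp: cyl_prob_def step_dist_def path_prob_snoc pmf_return hd_append)

lemma cyl_prob_nonneg: "0 \<le> cyl_prob VM P \<sigma> s h"
  by (auto simp: cyl_prob_def path_prob_def prod_nonneg)

lemma path_prob_cong:
  assumes "\<And>g. g \<noteq> [] \<Longrightarrow> hd g = hd h \<Longrightarrow> \<sigma>1 g = \<sigma>2 g"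
  shows "path_prob VM P \<sigma>1 h = path_prob VM P \<sigma>2 h"
  unfolding path_prob_def
proof (rule prod.cong [OF refl])
  fix i assume "i \<in> {..<length h - 1}"
  then have "take (Suc i) h \<noteq> []" "hd (take (Suc i) h) = hd h" by (auto simp: hd_take)
  then show "pmf (next_dist VM P \<sigma>1 (take (Suc i) h)) (h ! Suc i) =
      pmf (next_dist VM P \<sigma>2 (take (Suc i) h)) (h ! Suc i)"
    using assms by (simp add: next_dist_def)
qed

lemma path_prob_append:
  assumes "h \<noteq> []" "g \<noteq> []" "hd g = last h"
  shows "path_prob VM P \<sigma> (butlast h @ g) = path_prob VM P \<sigma> h * path_prob VM P (\<lambda>l. \<sigma> (butlast h @ l)) g"
  using assms(2,3)
proof (induction g rule: rev_induct)
  case Nil then show ?case by simp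
next
  case (snoc a g)
  show ?case
  proof (cases "g = []")
    case True
    then have "butlast h @ [a] = h" using snoc assms(1) by simp
    then show ?thesis using True by simp
  next
    case False
    have shift: "next_dist VM P (\<lambda>l. \<sigma> (butlast h @ l)) g = next_dist VM P \<sigma> (butlast h @ g)"
      using False by (simp add: next_dist_def)
    have "path_prob VM P \<sigma> (butlast h @ g @ [a]) =
        path_prob VM P \<sigma> (butlast h @ g) * pmf (next_dist VM P \<sigma> (butlast h @ g)) a"
      using path_prob_snoc[of "butlast h @ g"] False by simp
    also have "\<dots> = path_prob VM P \<sigma> h * path_prob VM P (\<lambda>l. \<sigma> (butlast h @ l)) (g @ [a])"
      using snoc False by (simp add: path_prob_snoc shift)
    finally show ?thesis by simp
  qed
qed

lemma cyl_prob_append: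
  assumes "h \<noteq> []" "g \<noteq> []" "hd g = last h"
  shows "cyl_prob VM P \<sigma> s (butlast h @ g) = cyl_prob VM P \<sigma> s h * cyl_prob VM P (\<lambda>l. \<sigma> (butlast h @ l)) (last h) g"
proof -
  have "hd (butlast h @ g) = hd h"
    using assms by (cases h rule: rev_cases) (auto simp: hd_append)
  then show ?thesis using assms path_prob_append[OF assms, of VM P \<sigma>] by (simp add: cyl_prob_def)
qed

subsection \<open>Construction of the measure on runs\<close>

text \<open>The run measure is obtained from the Ionescu-Tulcea theorem applied to the kernels
  step_dist; cylinders of the finite products are described by prefix_cyl.\<close>
definition prefix_cyl :: "'v list \<Rightarrow> (nat \<Rightarrow> 'v) set" where
  "prefix_cyl h = {x \<in> space (PiM {0..<length h} (\<lambda>_. count_space UNIV)). \<forall>j<length h. x j = h ! j}"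

lemma prefix_cyl_sets: "prefix_cyl h \<in> sets (PiM {0..<length h} (\<lambda>_. count_space UNIV))"
  unfolding prefix_cyl_def by measurable

lemma map_upt_eq_iff: "map x [0..<n] = l \<longleftrightarrow> length l = n \<and> (\<forall>j<n. x j = l ! j)"
  by (auto simp: list_eq_iff_nth_eq)

lemma measurable_map_upt:
  "(\<lambda>x. map x [0..<i]) \<in> measurable (PiM {0..<i} (\<lambda>_. count_space (UNIV::'v::countable set))) (count_space UNIV)"
proof (subst measurable_count_space_eq_countable, simp, safe)
  fix l :: "'v list"
  have "(\<lambda>x. map x [0..<i]) -` {l} \<inter> space (PiM {0..<i} (\<lambda>_. count_space UNIV)) =
      {x \<in> space (PiM {0..<i} (\<lambda>_. count_space UNIV)). length l = i \<and> (\<forall>j<i. x j = l ! j)}"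
    by (auto simp: map_upt_eq_iff)
  also have "\<dots> \<in> sets (PiM {0..<i} (\<lambda>_. count_space UNIV))"
    by measurable
  finally show "(\<lambda>x. map x [0..<i]) -` {l} \<inter> space (PiM {0..<i} (\<lambda>_. count_space UNIV)) \<in>
      sets (PiM {0..<i} (\<lambda>_. count_space UNIV))" .
qed simp

lemma measurable_step_dist:
  "(\<lambda>x. measure_pmf (step_dist VM P \<sigma> s (map x [0..<i]))) \<in>
    measurable (PiM {0..<i} (\<lambda>_. count_space (UNIV::'v::countable set))) (subprob_algebra (count_space UNIV))"
proof -
  have "(\<lambda>l. measure_pmf (step_dist VM P \<sigma> s l)) \<in>
      measurable (count_space UNIV) (subprob_algebra (count_space (UNIV::'v set)))"
    by (auto simp: space_subprob_algebra subprob_space_measure_pmf)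
  from measurable_compose[OF measurable_map_upt this] show ?thesis by (simp add: comp_def)
qed

lemma prefix_cyl_upd:
  assumes x: "x \<in> space (PiM {0..<n} (\<lambda>_. count_space UNIV))" and l: "length h = n"
  shows "x(n := y) \<in> prefix_cyl (h @ [a]) \<longleftrightarrow> x \<in> prefix_cyl h \<and> y = a"
proof -
  have "x(n := y) \<in> space (PiM {0..<Suc n} (\<lambda>_. count_space UNIV))"
    using x by (auto simp: space_PiM PiE_iff extensional_def)
  moreover have "(\<forall>j<Suc n. (x(n := y)) j = (h @ [a]) ! j) \<longleftrightarrow> (\<forall>j<n. x j = h ! j) \<and> y = a"
    using l by (auto simp: less_Suc_eq nth_append)
  ultimately show ?thesis using x l by (simp add: prefix_cyl_def)
qed

locale run_construction =
  fixes VM :: "'v::finite set" and P :: "'v \<Rightarrow> 'v pmf" and \<sigma> :: "'v list \<Rightarrow> 'v pmf" and s :: 'v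
begin

sublocale IT: Ionescu_Tulcea "\<lambda>i x. measure_pmf (step_dist VM P \<sigma> s (map x [0..<i]))" "\<lambda>_. count_space UNIV"
  by unfold_locales (auto simp: measurable_step_dist prob_space_measure_pmf)

lemma emeasure_eP_prefix_cyl:
  assumes x: "x \<in> space (PiM {0..<n} (\<lambda>_. count_space UNIV))" and l: "length h = n"
  shows "emeasure (IT.eP n x) (prefix_cyl (h @ [a])) =
    indicator (prefix_cyl h) x * ennreal (pmf (step_dist VM P \<sigma> s h) a)"
proof -
  have cyl: "prefix_cyl (h @ [a]) \<in> sets (PiM {0..<Suc n} (\<lambda>_. count_space UNIV))"
    using l prefix_cyl_sets[of "h @ [a]"] by simp
  have "emeasure (IT.eP n x) (prefix_cyl (h @ [a])) =
      emeasure (measure_pmf (step_dist VM P \<sigma> s (map x [0..<n]))) ((\<lambda>y. x(n := y)) -` prefix_cyl (h @ [a]) \<inter> UNIV)"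
    using IT.emeasure_eP[OF x cyl] by simp
  also have "\<dots> = indicator (prefix_cyl h) x * ennreal (pmf (step_dist VM P \<sigma> s h) a)"
  proof (cases "x \<in> prefix_cyl h")
    case True
    then have "map x [0..<n] = h" using l by (auto simp: prefix_cyl_def map_upt_eq_iff)
    moreover have "(\<lambda>y. x(n := y)) -` prefix_cyl (h @ [a]) \<inter> UNIV = {a}"
      using True prefix_cyl_upd[OF x l] by auto
    ultimately show ?thesis using True by (simp add: emeasure_pmf_single)
  next
    case False
    then have "(\<lambda>y. x(n := y)) -` prefix_cyl (h @ [a]) \<inter> UNIV = {}"
      using prefix_cyl_upd[OF x l] by auto
    then show ?thesis using False by simp
  qed
  finally show ?thesis .
qed

lemma C_prefix_cyl:
  "length h = n \<Longrightarrow> emeasure (IT.C 0 n (\<lambda>_. undefined)) (prefix_cyl h) = ennreal (cyl_prob VM P \<sigma> s h)"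
proof (induction n arbitrary: h)
  case 0
  then have "h = []" by simp
  moreover have "(\<lambda>_. undefined) \<in> space (PiM {0..<0} (\<lambda>_. count_space (UNIV::'v set)))"
    by (simp add: space_PiM PiE_def extensional_def)
  ultimately show ?case by (simp add: prefix_cyl_def cyl_prob_def)
next
  case (Suc n)
  then obtain h0 a where h: "h = h0 @ [a]" and l0: "length h0 = n"
    by (cases h rule: rev_cases) auto
  let ?u = "(\<lambda>_. undefined) :: nat \<Rightarrow> 'v" and ?Pi = "\<lambda>n. PiM {0..<n} (\<lambda>_. count_space (UNIV::'v set))"
  have u: "?u \<in> space (?Pi 0)"
    by (simp add: space_PiM PiE_def extensional_def)
  have sets_C: "sets (IT.C 0 n ?u) = sets (?Pi n)"
    using IT.sets_C[OF u, of n] by simp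
  have space_C: "space (IT.C 0 n ?u) = space (?Pi n)"
    using IT.space_C[OF u] by simp
  have ne: "space (IT.C 0 n ?u) \<noteq> {}"
    using IT.prob_space_C[OF u] prob_space.not_empty by blast
  have eP: "IT.eP n \<in> measurable (IT.C 0 n ?u) (subprob_algebra (?Pi (Suc n)))"
    unfolding measurable_cong_sets[OF sets_C refl] by (rule IT.measurable_eP)
  have cyl: "prefix_cyl h \<in> sets (?Pi (Suc n))"
    using Suc.prems prefix_cyl_sets[of h] by simp
  have "emeasure (IT.C 0 (Suc n) ?u) (prefix_cyl h) = \<integral>\<^sup>+x. emeasure (IT.eP n x) (prefix_cyl h) \<partial>IT.C 0 n ?u"
    by (simp add: emeasure_bind[OF ne eP cyl])
  also have "\<dots> = \<integral>\<^sup>+x. indicator (prefix_cyl h0) x * ennreal (pmf (step_dist VM P \<sigma> s h0) a) \<partial>IT.C 0 n ?u"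
    by (intro nn_integral_cong) (simp add: h space_C emeasure_eP_prefix_cyl l0)
  also have "\<dots> = ennreal (pmf (step_dist VM P \<sigma> s h0) a) * emeasure (IT.C 0 n ?u) (prefix_cyl h0)"
  proof -
    have "prefix_cyl h0 \<in> sets (IT.C 0 n ?u)"
      using sets_C l0 prefix_cyl_sets[of h0] by simp
    then show ?thesis by (subst nn_integral_multc) (auto simp: mult.commute)
  qed
  also have "\<dots> = ennreal (cyl_prob VM P \<sigma> s h)"
    using Suc.IH[OF l0] by (simp add: h cyl_prob_snoc ennreal_mult cyl_prob_nonneg mult.commute)
  finally show ?case .
qed

definition run_lim :: "'v stream measure" where
  "run_lim = distr IT.PF.lim (stream_space (count_space UNIV)) to_stream"

lemma sets_run_lim: "sets run_lim = sets (stream_space (count_space UNIV))"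
  by (simp add: run_lim_def)

lemma run_lim_cyl: "emeasure run_lim (sstart UNIV h) = ennreal (cyl_prob VM P \<sigma> s h)"
proof -
  have to_stream: "to_stream \<in> measurable IT.PF.lim (stream_space (count_space UNIV))"
    unfolding measurable_cong_sets[OF IT.PF.sets_lim refl] by (rule measurable_to_stream)
  have space: "space (PiM UNIV (\<lambda>_. count_space (UNIV::'v set))) = UNIV"
    by (auto simp: space_PiM)
  have "to_stream -` sstart UNIV h \<inter> space (PiM UNIV (\<lambda>_. count_space (UNIV::'v set))) =
      IT.PF.emb UNIV {0..<length h} (prefix_cyl h)"
    unfolding space by (auto simp: sstart_eq to_stream_def prod_emb_iff prefix_cyl_def space_PiM)
  then have "emeasure run_lim (sstart UNIV h) = emeasure IT.PF.lim (IT.PF.emb UNIV {0..<length h} (prefix_cyl h))"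
    unfolding run_lim_def by (simp add: emeasure_distr[OF to_stream sstart_sets])
  also have "\<dots> = emeasure (IT.CI {0..<length h}) (prefix_cyl h)"
    by (rule IT.lim[OF _ prefix_cyl_sets]) simp
  also have "\<dots> = emeasure (IT.C 0 (length h) (\<lambda>_. undefined)) (prefix_cyl h)"
  proof -
    have "IT.PF.emb {0..<length h} {0..<length h} (prefix_cyl h) = prefix_cyl h"
      by (rule prod_emb_id) (auto simp: prefix_cyl_def space_PiM)
    then show ?thesis using IT.emeasure_CI[OF _ prefix_cyl_sets[of h], of "length h"] by simp
  qed
  also have "\<dots> = ennreal (cyl_prob VM P \<sigma> s h)" by (rule C_prefix_cyl) simp
  finally show ?thesis .
qed

lemma prob_space_run_lim: "prob_space run_lim"
proof (rule prob_spaceI)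
  have "space run_lim = sstart UNIV []"
    by (simp add: run_lim_def space_stream_space)
  then show "emeasure run_lim (space run_lim) = 1"
    using run_lim_cyl[of "[]"] by (simp add: cyl_prob_def)
qed

end

lemma sstart_UNIV: "sstart UNIV h = {\<omega>. stake (length h) \<omega> = h}"
  by (auto simp: sstart_eq list_eq_iff_nth_eq)

text \<open>The measure chosen by run_measure has the prescribed cylinder probabilities, since the
  Ionescu-Tulcea limit witnesses that such a measure exists.\<close>
lemma run_measure_spec:
  "sets (run_measure VM P \<sigma> s) = sets (stream_space (count_space UNIV)) \<and> prob_space (run_measure VM P \<sigma> (s::'v::finite)) \<and>
     (\<forall>h. h \<noteq> [] \<longrightarrow> emeasure (run_measure VM P \<sigma> s) {\<omega> \<in> space (run_measure VM P \<sigma> s). stake (length h) \<omega> = h}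
          = ennreal (if hd h = s then path_prob VM P \<sigma> h else 0))"
  unfolding run_measure_def
proof (rule someI_ex)
  interpret R: run_construction VM P \<sigma> s .
  have "space R.run_lim = UNIV"
    using sets_eq_imp_space_eq[OF R.sets_run_lim] by (simp add: space_stream_space)
  then show "\<exists>M. sets M = sets (stream_space (count_space UNIV)) \<and> prob_space M \<and>
     (\<forall>h. h \<noteq> [] \<longrightarrow> emeasure M {\<omega> \<in> space M. stake (length h) \<omega> = h}
          = ennreal (if hd h = s then path_prob VM P \<sigma> h else 0))"
    using R.sets_run_lim R.prob_space_run_lim R.run_lim_cyl
    by (intro exI[of _ R.run_lim]) (simp flip: sstart_UNIV add: cyl_prob_def)
qed

lemma sets_run_measure [measurable_cong]:
  "sets (run_measure VM P \<sigma> (s::'v::finite)) = sets (stream_space (count_space UNIV))"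
  using run_measure_spec by blast

lemma prob_space_run_measure: "prob_space (run_measure VM P \<sigma> (s::'v::finite))"
  using run_measure_spec by blast

lemma space_run_measure [simp]: "space (run_measure VM P \<sigma> (s::'v::finite)) = UNIV"
  using sets_eq_imp_space_eq[OF sets_run_measure] by (simp add: space_stream_space)

lemma emeasure_run_UNIV [simp]: "emeasure (run_measure VM P \<sigma> (s::'v::finite)) UNIV = 1"
  using prob_space.emeasure_space_1[OF prob_space_run_measure, of VM P \<sigma> s] by simp

lemma emeasure_run_cyl:
  "emeasure (run_measure VM P \<sigma> (s::'v::finite)) (sstart UNIV h) = ennreal (cyl_prob VM P \<sigma> s h)"
proof (cases "h = []")
  case True
  then show ?thesis by (simp add: cyl_prob_def)
next
  case False
  then show ?thesis using run_measure_spec[of VM P \<sigma> s] by (auto simp: cyl_prob_def sstart_UNIV)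
qed

lemma measure_run_cyl:
  "measure (run_measure VM P \<sigma> (s::'v::finite)) (sstart UNIV h) = cyl_prob VM P \<sigma> s h"
  using emeasure_run_cyl[of VM P \<sigma> s h] by (simp add: measure_def cyl_prob_nonneg)

lemma emeasure_run_eq_measure:
  "emeasure (run_measure VM P \<sigma> (s::'v::finite)) X = ennreal (measure (run_measure VM P \<sigma> s) X)"
  by (rule finite_measure.emeasure_eq_measure[OF prob_space.finite_measure[OF prob_space_run_measure]])

lemma run_measure_cong:
  assumes "\<And>g. g \<noteq> [] \<Longrightarrow> hd g = s \<Longrightarrow> \<sigma>1 g = \<sigma>2 g"
  shows "run_measure VM P \<sigma>1 s = run_measure VM P \<sigma>2 s"
proof -
  have "\<And>h. hd h = s \<Longrightarrow> path_prob VM P \<sigma>1 h = path_prob VM P \<sigma>2 h"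
    by (rule path_prob_cong) (use assms in auto)
  then show ?thesis unfolding run_measure_def by (simp cong: if_cong)
qed

lemma stream_measure_eqI:
  fixes M N :: "'v::countable stream measure"
  assumes "finite_measure M" "finite_measure N"
    and sM: "sets M = sets (stream_space (count_space UNIV))" and sN: "sets N = sets (stream_space (count_space UNIV))"
    and eq: "\<And>xs. emeasure M (sstart UNIV xs) = emeasure N (sstart UNIV xs)"
  shows "M = N"
proof (rule measure_eqI_generator_eq[where \<Omega>=UNIV and E="sstart (UNIV::'v set) ` UNIV \<union> {{}}" and A="\<lambda>_. UNIV"])
  have gen: "sets (stream_space (count_space (UNIV::'v set))) = sigma_sets UNIV (sstart UNIV ` UNIV \<union> {{}})"
    using sets_stream_space_sstart[of "UNIV::'v set"] by (simp add: sets_measure_of_conv)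
  show "Int_stable (sstart (UNIV::'v set) ` UNIV \<union> {{}})"
    using Int_stable_sstart[of "UNIV::'v set"] by (metis lists_UNIV)
  show "sets M = sigma_sets UNIV (sstart (UNIV::'v set) ` UNIV \<union> {{}})" using sM gen by simp
  show "sets N = sigma_sets UNIV (sstart (UNIV::'v set) ` UNIV \<union> {{}})" using sN gen by simp
  show "range (\<lambda>_. UNIV) \<subseteq> sstart (UNIV::'v set) ` UNIV \<union> {{}}"
    by (auto intro!: image_eqI[where x="[]"])
  show "emeasure M UNIV \<noteq> \<infinity>" for i :: nat
    using finite_measure.emeasure_finite[OF assms(1), of UNIV] by simp
qed (use eq in auto)

lemma stake_append_iff:
  "stake (length b + length xs) \<omega> = b @ xs \<longleftrightarrow> stake (length b) \<omega> = b \<and> stake (length xs) (sdrop (length b) \<omega>) = xs"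
  by (simp flip: stake_add add: append_eq_append_conv)

lemma sstart_shift:
  assumes "h \<noteq> []" "xs \<noteq> []"
  shows "sstart UNIV h \<inter> sdrop (length h - 1) -` sstart UNIV xs =
    (if hd xs = last h then sstart UNIV (butlast h @ xs) else {})"
proof -
  obtain b x where h: "h = b @ [x]" using assms(1) by (cases h rule: rev_cases) auto
  obtain y ys where xs: "xs = y # ys" using assms(2) by (cases xs) auto
  have "stake (length (b @ [x])) \<omega> = b @ [x] \<and> stake (length (y # ys)) (sdrop (length b) \<omega>) = y # ys \<longleftrightarrow>
      x = y \<and> stake (length (b @ y # ys)) \<omega> = b @ y # ys" for \<omega>
    using stake_append_iff[of b "[x]" \<omega>] stake_append_iff[of b "y # ys" \<omega>]
    by (auto simp del: stake_add)
  then show ?thesis by (auto simp: h xs sstart_UNIV simp del: stake.simps)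
qed

lemma sdrop_vimage_sets:
  "X \<in> sets (stream_space (count_space UNIV)) \<Longrightarrow> sdrop n -` X \<in> sets (stream_space (count_space UNIV))"
  using measurable_sets[OF measurable_sdrop, of X "count_space UNIV" n] by (simp add: space_stream_space)

lemma emeasure_shifted_restriction:
  fixes M :: "'v::countable stream measure"
  assumes sets_M: "sets M = sets (stream_space (count_space UNIV))"
    and C: "C \<in> sets M" and X: "X \<in> sets (stream_space (count_space UNIV))"
  shows "emeasure (distr (density M (indicator C)) (stream_space (count_space UNIV)) (sdrop n)) X =
    emeasure M (C \<inter> sdrop n -` X)"
proof -
  have space_M: "space M = UNIV"
    using sets_eq_imp_space_eq[OF sets_M] by (simp add: space_stream_space)
  have sdrop: "sdrop n \<in> measurable (density M (indicator C)) (stream_space (count_space UNIV))"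
    by (simp add: measurable_cong_sets[OF sets_M refl])
  have X': "sdrop n -` X \<in> sets M"
    using sdrop_vimage_sets[OF X] sets_M by simp
  have "emeasure (distr (density M (indicator C)) (stream_space (count_space UNIV)) (sdrop n)) X =
      emeasure (density M (indicator C)) (sdrop n -` X)"
    using emeasure_distr[OF sdrop X] by (simp add: space_M)
  also have "\<dots> = (\<integral>\<^sup>+\<omega>. indicator C \<omega> * indicator (sdrop n -` X) \<omega> \<partial>M)"
    using X' C by (subst emeasure_density) auto
  also have "\<dots> = (\<integral>\<^sup>+\<omega>. indicator (C \<inter> sdrop n -` X) \<omega> \<partial>M)"
    by (intro nn_integral_cong) (simp split: split_indicator)
  also have "\<dots> = emeasure M (C \<inter> sdrop n -` X)"
    using X' C by (intro nn_integral_indicator) auto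
  finally show ?thesis .
qed

lemma run_shift_cyl:
  assumes h: "h \<noteq> []"
  shows "emeasure (run_measure VM P \<sigma> (s::'v::finite)) (sstart UNIV h \<inter> sdrop (length h - 1) -` sstart UNIV xs) =
    ennreal (cyl_prob VM P \<sigma> s h) * emeasure (run_measure VM P (\<lambda>l. \<sigma> (butlast h @ l)) (last h)) (sstart UNIV xs)"
proof (cases "xs = []")
  case True
  then show ?thesis using h by (simp add: emeasure_run_cyl cyl_prob_def)
next
  case xs: False
  show ?thesis
  proof (cases "hd xs = last h")
    case True
    then show ?thesis
      using sstart_shift[OF h xs] cyl_prob_append[OF h xs True]
      by (simp add: emeasure_run_cyl ennreal_mult cyl_prob_nonneg)
  next
    case False
    then show ?thesis
      using sstart_shift[OF h xs] xs by (simp add: emeasure_run_cyl cyl_prob_def)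
  qed
qed

text \<open>Markov property: the same factorisation holds for every measurable set B of continuations,
  since both sides are finite measures in B that agree on cylinders.\<close>
lemma run_shift:
  assumes h: "h \<noteq> []" and B: "B \<in> sets (stream_space (count_space UNIV))"
  shows "emeasure (run_measure VM P \<sigma> (s::'v::finite)) (sstart UNIV h \<inter> sdrop (length h - 1) -` B) =
    ennreal (cyl_prob VM P \<sigma> s h) * emeasure (run_measure VM P (\<lambda>l. \<sigma> (butlast h @ l)) (last h)) B"
proof -
  let ?M1 = "run_measure VM P \<sigma> s" and ?M2 = "run_measure VM P (\<lambda>l. \<sigma> (butlast h @ l)) (last h)"
  let ?C = "sstart UNIV h" and ?n = "length h - 1" and ?S = "stream_space (count_space (UNIV::'v set))"
  define N1 where "N1 = distr (density ?M1 (indicator ?C)) ?S (sdrop ?n)"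
  define N2 where "N2 = density ?M2 (\<lambda>_. ennreal (cyl_prob VM P \<sigma> s h))"
  have N1: "emeasure N1 X = emeasure ?M1 (?C \<inter> sdrop ?n -` X)" if "X \<in> sets ?S" for X
    unfolding N1_def using that by (intro emeasure_shifted_restriction) (auto simp: sets_run_measure sstart_sets)
  have N2: "emeasure N2 X = ennreal (cyl_prob VM P \<sigma> s h) * emeasure ?M2 X" if "X \<in> sets ?S" for X
    unfolding N2_def using that by (intro emeasure_density_const) (simp add: sets_run_measure)
  have UNIV: "UNIV \<in> sets ?S"
    using sets.top[of ?S] by (simp add: space_stream_space)
  have "N1 = N2"
  proof (rule stream_measure_eqI)
    show "sets N1 = sets ?S" by (simp add: N1_def)
    show "sets N2 = sets ?S" by (simp add: N2_def sets_run_measure)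
    have "emeasure N1 (space N1) = emeasure ?M1 (?C \<inter> sdrop ?n -` UNIV)"
      using N1[OF UNIV] by (simp add: N1_def space_stream_space)
    then show "finite_measure N1"
      using finite_measure.emeasure_finite[OF prob_space.finite_measure[OF prob_space_run_measure]]
      by (intro finite_measureI) simp
    have "emeasure N2 (space N2) = ennreal (cyl_prob VM P \<sigma> s h)"
      using N2[OF UNIV] by (simp add: N2_def)
    then show "finite_measure N2" by (intro finite_measureI) simp
    show "emeasure N1 (sstart UNIV xs) = emeasure N2 (sstart UNIV xs)" for xs
      using N1[OF sstart_sets] N2[OF sstart_sets] run_shift_cyl[OF h] by simp
  qed
  then show ?thesis using N1[OF B] N2[OF B] by simp
qed

lemma measure_run_shift:
  assumes h: "h \<noteq> []" and B: "B \<in> sets (stream_space (count_space UNIV))"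
  shows "measure (run_measure VM P \<sigma> (s::'v::finite)) (sstart UNIV h \<inter> sdrop (length h - 1) -` B) =
    cyl_prob VM P \<sigma> s h * measure (run_measure VM P (\<lambda>l. \<sigma> (butlast h @ l)) (last h)) B"
  using run_shift[OF h B, of VM P \<sigma> s] by (simp add: measure_def enn2real_mult cyl_prob_nonneg)

subsection \<open>Approximation of events by finite-horizon events\<close>

definition horizon_set :: "nat \<Rightarrow> 'v list set \<Rightarrow> 'v stream set" where
  "horizon_set n L = {\<omega>. stake n \<omega> \<in> L}"

lemma horizon_set_sets: "horizon_set n L \<in> sets (stream_space (count_space (UNIV::'v::countable set)))"
  using measurable_sets[OF measurable_stake, of L n] by (simp add: horizon_set_def space_stream_space vimage_def)

text \<open>Finite-horizon events can be reformulated at any larger horizon, so they are closed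
  under finite unions.\<close>
lemma horizon_set_lift: "n \<le> m \<Longrightarrow> horizon_set n L = horizon_set m {l. take n l \<in> L}"
  by (auto simp: horizon_set_def take_stake min_def)

lemma horizon_set_Un:
  "horizon_set n L1 \<union> horizon_set m L2 = horizon_set (max n m) ({l. take n l \<in> L1} \<union> {l. take m l \<in> L2})"
  using horizon_set_lift[of n "max n m" L1] horizon_set_lift[of m "max n m" L2] by (auto simp: horizon_set_def)

lemma horizon_set_cylinders:
  "horizon_set n L = (\<Union>h\<in>{l. take n l \<in> L \<and> length l = Suc n}. sstart UNIV h)"
proof (intro set_eqI iffI)
  fix \<omega> assume "\<omega> \<in> horizon_set n L"
  then have "stake (Suc n) \<omega> \<in> {l. take n l \<in> L \<and> length l = Suc n}"
    by (simp add: horizon_set_def take_stake del: stake.simps)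
  moreover have "\<omega> \<in> sstart UNIV (stake (Suc n) \<omega>)"
    by (simp add: sstart_UNIV del: stake.simps)
  ultimately show "\<omega> \<in> (\<Union>h\<in>{l. take n l \<in> L \<and> length l = Suc n}. sstart UNIV h)" by blast
next
  fix \<omega> assume "\<omega> \<in> (\<Union>h\<in>{l. take n l \<in> L \<and> length l = Suc n}. sstart UNIV h)"
  then obtain h where "take n h \<in> L" "length h = Suc n" "stake (Suc n) \<omega> = h"
    by (auto simp: sstart_UNIV simp del: stake.simps)
  then show "\<omega> \<in> horizon_set n L"
    by (auto simp: horizon_set_def take_stake simp del: stake.simps)
qed

lemma sstart_disjoint_family:
  assumes prefix_free: "\<And>h1 h2. h1 \<in> H \<Longrightarrow> h2 \<in> H \<Longrightarrow> take (length h1) h2 = h1 \<Longrightarrow> h1 = h2"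
  shows "disjoint_family_on (\<lambda>h. X h \<inter> sstart UNIV h) H"
  unfolding disjoint_family_on_def
proof (intro ballI impI)
  fix h1 h2 assume h: "h1 \<in> H" "h2 \<in> H" "h1 \<noteq> h2"
  show "X h1 \<inter> sstart UNIV h1 \<inter> (X h2 \<inter> sstart UNIV h2) = {}"
  proof (rule ccontr)
    assume "X h1 \<inter> sstart UNIV h1 \<inter> (X h2 \<inter> sstart UNIV h2) \<noteq> {}"
    then obtain \<omega> where w1: "stake (length h1) \<omega> = h1" and w2: "stake (length h2) \<omega> = h2"
      by (auto simp: sstart_UNIV)
    have "take (length h1) h2 = h1 \<or> take (length h2) h1 = h2"
      using w1 w2 take_stake[of "length h1" "length h2" \<omega>] take_stake[of "length h2" "length h1" \<omega>]
      by (auto simp: min_def split: if_splits)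
    then show False using prefix_free[OF h(1,2)] prefix_free[OF h(2,1)] h(3) by auto
  qed
qed

locale stream_finite_measure = finite_measure M for M :: "'v::countable stream measure" +
  assumes sets_M: "sets M = sets (stream_space (count_space UNIV))"
begin

lemma space_M [simp]: "space M = UNIV"
  using sets_eq_imp_space_eq[OF sets_M] by (simp add: space_stream_space)

lemma horizon_set_in_M [measurable]: "horizon_set n L \<in> sets M"
  using horizon_set_sets by (simp add: sets_M)

definition approximable :: "'v stream set \<Rightarrow> bool" where
  "approximable A \<longleftrightarrow> (\<forall>e>0. \<exists>n L. measure M (sym_diff A (horizon_set n L)) < e)"

lemma approximable_horizon_set: "approximable (horizon_set n L)"
  unfolding approximable_def by (intro allI impI exI[of _ n] exI[of _ L]) simp

lemma approximable_Compl: "approximable A \<Longrightarrow> approximable (UNIV - A)"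
  unfolding approximable_def
proof (intro allI impI)
  fix e :: real assume "\<forall>e>0. \<exists>n L. measure M (sym_diff A (horizon_set n L)) < e" "0 < e"
  then obtain n L where "measure M (sym_diff A (horizon_set n L)) < e" by blast
  moreover have "sym_diff (UNIV - A) (horizon_set n (UNIV - L)) = sym_diff A (horizon_set n L)"
    by (auto simp: horizon_set_def)
  ultimately show "\<exists>n L. measure M (sym_diff (UNIV - A) (horizon_set n L)) < e" by metis
qed

lemma approximable_Un:
  assumes A: "A \<in> sets M" "approximable A" and B: "B \<in> sets M" "approximable B"
  shows "approximable (A \<union> B)"
  unfolding approximable_def
proof (intro allI impI)
  fix e :: real assume e: "0 < e"
  obtain n1 L1 where 1: "measure M (sym_diff A (horizon_set n1 L1)) < e / 2"
    using A(2) e unfolding approximable_def by (meson half_gt_zero)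
  obtain n2 L2 where 2: "measure M (sym_diff B (horizon_set n2 L2)) < e / 2"
    using B(2) e unfolding approximable_def by (meson half_gt_zero)
  let ?D1 = "horizon_set n1 L1" and ?D2 = "horizon_set n2 L2"
  have "measure M (sym_diff (A \<union> B) (?D1 \<union> ?D2)) \<le> measure M (sym_diff A ?D1 \<union> sym_diff B ?D2)"
    using A B by (intro finite_measure_mono) auto
  also have "\<dots> \<le> measure M (sym_diff A ?D1) + measure M (sym_diff B ?D2)"
    using A B by (intro measure_Un_le) auto
  finally have "measure M (sym_diff (A \<union> B) (?D1 \<union> ?D2)) < e" using 1 2 by linarith
  then show "\<exists>n L. measure M (sym_diff (A \<union> B) (horizon_set n L)) < e"
    unfolding horizon_set_Un by blast
qed

lemma approximable_UN_lessThan: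
  fixes A :: "nat \<Rightarrow> 'v stream set"
  assumes "\<And>i. A i \<in> sets M" "\<And>i. approximable (A i)"
  shows "approximable (\<Union>i<k. A i)"
proof (induction k)
  case 0
  have "(\<Union>i<0. A i) = horizon_set 0 {}" by (simp add: horizon_set_def)
  then show ?case using approximable_horizon_set by metis
next
  case (Suc k)
  then show ?case
    using approximable_Un[OF _ Suc.IH, of "A k"] assms by (simp add: lessThan_Suc Un_commute)
qed

text \<open>Approximable sets are closed under countable unions: a countable union is the limit in
  measure of its finite partial unions.\<close>
lemma approximable_UN:
  fixes A :: "nat \<Rightarrow> 'v stream set"
  assumes A: "\<And>i. A i \<in> sets M" "\<And>i. approximable (A i)"
  shows "approximable (\<Union>i. A i)"
  unfolding approximable_def
proof (intro allI impI)
  fix e :: real assume e: "0 < e"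
  let ?U = "\<Union>i. A i" and ?F = "\<lambda>k. \<Union>i<k. A i"
  have "incseq ?F"
    unfolding incseq_def by (intro allI impI UN_mono) auto
  then have "(\<lambda>k. measure M (?F k)) \<longlonglongrightarrow> measure M (\<Union>k. ?F k)"
    using A by (intro finite_Lim_measure_incseq) auto
  moreover have "(\<Union>k. ?F k) = ?U" by blast
  ultimately have "eventually (\<lambda>k. measure M ?U - e / 2 < measure M (?F k)) sequentially"
    using e by (intro order_tendstoD) auto
  then obtain k where k: "measure M ?U - e / 2 < measure M (?F k)"
    by (auto simp: eventually_sequentially)
  obtain n L where nL: "measure M (sym_diff (?F k) (horizon_set n L)) < e / 2"
    using approximable_UN_lessThan[OF A, where k=k] e unfolding approximable_def by (meson half_gt_zero)
  have "measure M (sym_diff ?U (horizon_set n L)) \<le> measure M ((?U - ?F k) \<union> sym_diff (?F k) (horizon_set n L))"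
    using A by (intro finite_measure_mono) auto
  also have "\<dots> \<le> measure M (?U - ?F k) + measure M (sym_diff (?F k) (horizon_set n L))"
    using A by (intro measure_Un_le) auto
  also have "measure M (?U - ?F k) = measure M ?U - measure M (?F k)"
    using A by (intro finite_measure_Diff) auto
  finally show "\<exists>n L. measure M (sym_diff ?U (horizon_set n L)) < e"
    using k nL by (intro exI[of _ n] exI[of _ L]) linarith
qed

text \<open>Every measurable set of streams is approximable, since approximable sets contain the
  generating cylinders and are closed under complement and countable union.\<close>
lemma approximable_sets:
  assumes "A \<in> sets M"
  shows "approximable A"
proof -
  have "A \<in> sigma_sets UNIV (sstart (UNIV::'v set) ` UNIV \<union> {{}})"
    using assms sets_stream_space_sstart[of "UNIV::'v set"] by (simp add: sets_M sets_measure_of_conv)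
  then show ?thesis
  proof (induction rule: sigma_sets.induct)
    case (Basic A)
    have "\<exists>n L. A = horizon_set n L"
    proof (cases "A = {}")
      case True
      then show ?thesis by (intro exI[of _ 0] exI[of _ "{}"]) (simp add: horizon_set_def)
    next
      case False
      then obtain xs where "A = sstart UNIV xs" using Basic by auto
      then show ?thesis
        by (intro exI[of _ "length xs"] exI[of _ "{xs}"]) (simp add: horizon_set_def sstart_UNIV)
    qed
    then show ?case using approximable_horizon_set by auto
  next
    case Empty
    have "{} = horizon_set 0 ({} :: 'v list set)" by (simp add: horizon_set_def)
    then show ?case using approximable_horizon_set by metis
  next
    case (Compl A)
    from Compl.IH show ?case by (rule approximable_Compl)
  next
    case (Union A)
    have "A i \<in> sets M" for i
      using Union.hyps sets_stream_space_sstart[of "UNIV::'v set"] by (simp add: sets_M sets_measure_of_conv)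
    then show ?case using Union.IH by (rule approximable_UN)
  qed
qed

text \<open>A finite-horizon event is a disjoint union of cylinders, so a bound on the relative
  measure of A in every cylinder carries over to finite-horizon events.\<close>
lemma horizon_set_bound:
  assumes A: "A \<in> sets M" and c: "0 \<le> c"
    and bound: "\<And>h. h \<noteq> [] \<Longrightarrow> measure M (A \<inter> sstart UNIV h) \<le> c * measure M (sstart UNIV h)"
  shows "measure M (A \<inter> horizon_set n L) \<le> c * measure M (horizon_set n L)"
proof -
  define H where "H = {l. take n l \<in> L \<and> length l = Suc n}"
  have D: "horizon_set n L = (\<Union>h\<in>H. sstart UNIV h)"
    unfolding H_def by (rule horizon_set_cylinders)
  have countable: "countable H"
    by (rule countable_subset[OF subset_UNIV]) simp
  have cyl: "sstart UNIV h \<in> sets M" for h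
    by (simp add: sets_M sstart_sets)
  have A_cyl: "A \<inter> sstart UNIV h \<in> sets M" for h
    using A cyl by (rule sets.Int)
  have disj_A: "disjoint_family_on (\<lambda>h. A \<inter> sstart UNIV h) H"
    and disj: "disjoint_family_on (\<lambda>h. sstart UNIV h) H"
    using sstart_disjoint_family[of H "\<lambda>_. A"] sstart_disjoint_family[of H "\<lambda>_. UNIV"]
    by (auto simp: H_def)
  have le: "emeasure M (A \<inter> sstart UNIV h) \<le> ennreal c * emeasure M (sstart UNIV h)" if "h \<in> H" for h
  proof -
    have "h \<noteq> []" using that by (auto simp: H_def)
    then have "ennreal (measure M (A \<inter> sstart UNIV h)) \<le> ennreal (c * measure M (sstart UNIV h))"
      by (intro ennreal_leI bound)
    also have "\<dots> = ennreal c * ennreal (measure M (sstart UNIV h))"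
      using c by (simp add: ennreal_mult)
    finally show ?thesis by (simp only: emeasure_eq_measure)
  qed
  have "A \<inter> horizon_set n L = (\<Union>h\<in>H. A \<inter> sstart UNIV h)"
    unfolding D by blast
  then have "emeasure M (A \<inter> horizon_set n L) = emeasure M (\<Union>h\<in>H. A \<inter> sstart UNIV h)"
    by (rule arg_cong)
  also have "\<dots> = (\<integral>\<^sup>+h. emeasure M (A \<inter> sstart UNIV h) \<partial>count_space H)"
    by (rule emeasure_UN_countable[OF A_cyl countable disj_A])
  also have "\<dots> \<le> (\<integral>\<^sup>+h. ennreal c * emeasure M (sstart UNIV h) \<partial>count_space H)"
    using le by (intro nn_integral_mono) simp
  also have "\<dots> = ennreal c * (\<integral>\<^sup>+h. emeasure M (sstart UNIV h) \<partial>count_space H)"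
    by (rule nn_integral_cmult) simp
  also have "(\<integral>\<^sup>+h. emeasure M (sstart UNIV h) \<partial>count_space H) = emeasure M (horizon_set n L)"
    unfolding D by (rule emeasure_UN_countable[OF cyl countable disj, symmetric])
  finally have "ennreal (measure M (A \<inter> horizon_set n L)) \<le> ennreal (c * measure M (horizon_set n L))"
    by (simp only: emeasure_eq_measure ennreal_mult[OF c(1) measure_nonneg])
  moreover have "0 \<le> c * measure M (horizon_set n L)"
    using c by (intro mult_nonneg_nonneg) auto
  ultimately show ?thesis by (simp add: ennreal_le_iff)
qed

text \<open>Approximating A by a finite-horizon event D gives
  M(A) \<approx> M(A \<inter> D) \<le> c M(D) \<approx> c M(A).\<close>
lemma null_if_cylinder_bound:
  assumes A: "A \<in> sets M" and c: "0 \<le> c" "c < 1"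
    and bound: "\<And>h. h \<noteq> [] \<Longrightarrow> measure M (A \<inter> sstart UNIV h) \<le> c * measure M (sstart UNIV h)"
  shows "measure M A = 0"
proof -
  have "(1 - c) * measure M A \<le> 0 + e" if e: "e > 0" for e
  proof -
    obtain n L where nL: "measure M (sym_diff A (horizon_set n L)) < e / 2"
      using approximable_sets[OF A] e unfolding approximable_def by (meson half_gt_zero)
    let ?D = "horizon_set n L"
    have "measure M A = measure M ((A \<inter> ?D) \<union> (A - ?D))"
      by (simp add: Int_Diff_Un)
    also have "\<dots> \<le> measure M (A \<inter> ?D) + measure M (A - ?D)"
      using A by (intro measure_Un_le) auto
    finally have A_le: "measure M A \<le> measure M (A \<inter> ?D) + measure M (A - ?D)" .
    have "measure M ?D \<le> measure M (A \<union> (?D - A))"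
      using A by (intro finite_measure_mono) auto
    also have "\<dots> \<le> measure M A + measure M (?D - A)"
      using A by (intro measure_Un_le) auto
    finally have D_le: "measure M ?D \<le> measure M A + measure M (?D - A)" .
    have AD: "measure M (A - ?D) \<le> e / 2" and DA: "measure M (?D - A) \<le> e / 2"
      using nL A finite_measure_mono[of "A - ?D" "sym_diff A ?D"]
        finite_measure_mono[of "?D - A" "sym_diff A ?D"] by auto
    have "measure M (A \<inter> ?D) \<le> c * measure M ?D"
      by (rule horizon_set_bound[OF A c(1) bound])
    also have "\<dots> \<le> c * (measure M A + e / 2)"
      using D_le DA c by (intro mult_left_mono) auto
    finally have "measure M A \<le> c * (measure M A + e / 2) + e / 2"
      using A_le AD by linarith
    then have "(1 - c) * measure M A \<le> (1 + c) * (e / 2)"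
      by (simp add: algebra_simps)
    also have "\<dots> \<le> 2 * (e / 2)"
      using c e by (intro mult_right_mono) auto
    finally show ?thesis by simp
  qed
  then have "(1 - c) * measure M A \<le> 0" by (rule field_le_epsilon)
  then show ?thesis using c(2) measure_nonneg[of M A] by (simp add: mult_le_0_iff)
qed

end

lemma strategy_shift: "strategy E VM \<sigma> \<Longrightarrow> strategy E VM (\<lambda>l. \<sigma> (b @ l))"
  unfolding strategy_def
proof (intro allI impI)
  fix h assume \<sigma>: "\<forall>h. h \<noteq> [] \<and> last h \<in> VM \<longrightarrow> set_pmf (\<sigma> h) \<subseteq> E `` {last h}"
    and h: "h \<noteq> [] \<and> last h \<in> VM"
  then have "set_pmf (\<sigma> (b @ h)) \<subseteq> E `` {last (b @ h)}" by (intro \<sigma>[rule_format]) auto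
  then show "set_pmf (\<sigma> (b @ h)) \<subseteq> E `` {last h}" using h by simp
qed

lemma Reach_sets: "Reach W \<in> sets (stream_space (count_space (UNIV::'v::countable set)))"
proof -
  have "Reach W = (\<Union>i. (\<lambda>w. w !! i) -` W \<inter> space (stream_space (count_space (UNIV::'v set))))"
    by (auto simp: Reach_def space_stream_space)
  also have "\<dots> \<in> sets (stream_space (count_space (UNIV::'v set)))"
    by (intro sets.countable_UN measurable_sets[OF measurable_snth]) auto
  finally show ?thesis .
qed

locale finite_mdp =
  fixes E :: "('v::finite \<times> 'v) set" and VM :: "'v set" and P :: "'v \<Rightarrow> 'v pmf"
  assumes mdp: "mdp E VM P"
begin

text \<open>Since every state has a successor, some (memoryless) strategy exists.\<close>
lemma strategy_exists: "{\<sigma>. strategy E VM \<sigma>} \<noteq> {}"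
proof -
  have "\<forall>s. \<exists>t. (s, t) \<in> E" using mdp by (simp add: mdp_def)
  then have "strategy E VM (\<lambda>h. return_pmf (SOME t. (last h, t) \<in> E))"
    unfolding strategy_def by (auto intro: someI_ex)
  then show ?thesis by blast
qed

lemma bdd_above_measures: "bdd_above ((\<lambda>\<sigma>. measure (run_measure VM P \<sigma> s) X) ` {\<sigma>. strategy E VM \<sigma>})"
  using prob_space.prob_le_1[OF prob_space_run_measure] by (auto intro!: bdd_aboveI)

lemma measure_le_Val: "strategy E VM \<sigma> \<Longrightarrow> measure (run_measure VM P \<sigma> s) X \<le> Val E VM P X s"
  unfolding Val_def by (rule cSUP_upper) (auto simp: bdd_above_measures)

lemma Val_le:
  "(\<And>\<sigma>. strategy E VM \<sigma> \<Longrightarrow> measure (run_measure VM P \<sigma> s) X \<le> c) \<Longrightarrow> Val E VM P X s \<le> c"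
  unfolding Val_def by (rule cSUP_least) (use strategy_exists in auto)

lemma Val_le_1: "Val E VM P X s \<le> 1"
  by (rule Val_le) (rule prob_space.prob_le_1[OF prob_space_run_measure])

lemma less_Val_imp_strategy:
  "z < Val E VM P X s \<Longrightarrow> \<exists>\<sigma>. strategy E VM \<sigma> \<and> z < measure (run_measure VM P \<sigma> s) X"
  unfolding Val_def using less_cSUP_iff[OF strategy_exists bdd_above_measures] by auto

end

subsection \<open>Tail objectives\<close>

locale tail_objective = finite_mdp E VM P for E :: "('v::finite \<times> 'v) set" and VM P +
  fixes Ob :: "'v stream set"
  assumes tail: "\<forall>\<omega>. \<omega> \<in> Ob \<longleftrightarrow> stl \<omega> \<in> Ob"
    and Ob_sets: "Ob \<in> sets (stream_space (count_space UNIV))"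
begin

lemma Ob_sdrop: "\<omega> \<in> Ob \<longleftrightarrow> sdrop n \<omega> \<in> Ob"
proof (induction n arbitrary: \<omega>)
  case (Suc n)
  then show ?case using tail by (simp add: sdrop_stl[symmetric])
qed simp

definition W :: "'v set" where
  "W = {t. Val E VM P Ob t = 1}"

text \<open>The largest value of a state outside W; it is below 1 because there are finitely many states.\<close>
definition val_bound :: real where
  "val_bound = Max (insert 0 (Val E VM P Ob ` (- W)))"

lemma val_bound_spec: "0 \<le> val_bound" "val_bound < 1" "t \<notin> W \<Longrightarrow> Val E VM P Ob t \<le> val_bound"
proof -
  have fin: "finite (insert 0 (Val E VM P Ob ` (- W)))" by simp
  show "0 \<le> val_bound" "t \<notin> W \<Longrightarrow> Val E VM P Ob t \<le> val_bound"
    unfolding val_bound_def using fin by (auto intro: Max_ge)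
  have "val_bound \<in> insert 0 (Val E VM P Ob ` (- W))"
    unfolding val_bound_def using fin by (intro Max_in) auto
  then show "val_bound < 1" using Val_le_1[of Ob] by (auto simp: W_def less_le)
qed

subsubsection \<open>Winning Ob almost surely requires reaching W\<close>

definition Ob_avoid :: "'v stream set" where
  "Ob_avoid = Ob - Reach W"

lemma Ob_avoid_sets: "Ob_avoid \<in> sets (stream_space (count_space UNIV))"
  unfolding Ob_avoid_def using Ob_sets Reach_sets by auto

lemma Ob_avoid_cyl:
  assumes h: "h \<noteq> []" and avoid: "\<forall>i<length h. h ! i \<notin> W"
  shows "Ob_avoid \<inter> sstart UNIV h = sstart UNIV h \<inter> sdrop (length h - 1) -` Ob_avoid"
proof -
  have "\<omega> \<in> Reach W \<longleftrightarrow> sdrop (length h - 1) \<omega> \<in> Reach W" if "\<omega> \<in> sstart UNIV h" for \<omega>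
  proof -
    have prefix: "\<forall>i<length h. \<omega> !! i \<notin> W"
      using that avoid by (auto simp: sstart_eq)
    have "(\<exists>i. \<omega> !! i \<in> W) \<longleftrightarrow> (\<exists>j. \<omega> !! (length h - 1 + j) \<in> W)"
    proof
      assume "\<exists>i. \<omega> !! i \<in> W"
      then obtain i where "\<omega> !! i \<in> W" by blast
      moreover have "length h - 1 \<le> i"
      proof (rule ccontr)
        assume "\<not> length h - 1 \<le> i"
        then have "i < length h" by linarith
        then show False using prefix \<open>\<omega> !! i \<in> W\<close> by blast
      qed
      ultimately have "\<omega> !! (length h - 1 + (i - (length h - 1))) \<in> W" by simp
      then show "\<exists>j. \<omega> !! (length h - 1 + j) \<in> W" by blast
    qed blast
    then show ?thesis by (simp add: Reach_def sdrop_snth)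
  qed
  then show ?thesis using Ob_sdrop by (auto simp: Ob_avoid_def)
qed

text \<open>In every cylinder the probability of Ob_avoid is at most val_bound times the probability
  of the cylinder: either h visits W already, or by the Markov property the continuation wins Ob
  from the state last h \<notin> W with probability at most its value.\<close>
lemma Ob_avoid_cyl_bound:
  assumes \<sigma>: "strategy E VM \<sigma>" and h: "h \<noteq> []"
  shows "measure (run_measure VM P \<sigma> s) (Ob_avoid \<inter> sstart UNIV h) \<le>
    val_bound * measure (run_measure VM P \<sigma> s) (sstart UNIV h)"
proof (cases "\<exists>i<length h. h ! i \<in> W")
  case True
  then obtain i where i: "i < length h" "h ! i \<in> W" by auto
  have "\<omega> \<notin> Ob_avoid" if "\<omega> \<in> sstart UNIV h" for \<omega>
  proof -
    have "\<omega> !! i \<in> W" using that i by (simp add: sstart_eq)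
    then show ?thesis by (auto simp: Ob_avoid_def Reach_def)
  qed
  then have "Ob_avoid \<inter> sstart UNIV h = {}" by blast
  then show ?thesis using val_bound_spec(1) by (simp add: measure_run_cyl cyl_prob_nonneg)
next
  case False
  let ?\<sigma>' = "\<lambda>l. \<sigma> (butlast h @ l)" and ?t = "last h"
  have avoid: "\<forall>i<length h. h ! i \<notin> W" using False by blast
  have t: "?t \<notin> W" using avoid h by (simp add: last_conv_nth)
  have "measure (run_measure VM P ?\<sigma>' ?t) Ob_avoid \<le> measure (run_measure VM P ?\<sigma>' ?t) Ob"
    by (rule finite_measure.finite_measure_mono[OF prob_space.finite_measure[OF prob_space_run_measure]])
      (auto simp: Ob_avoid_def sets_run_measure Ob_sets)
  also have "\<dots> \<le> Val E VM P Ob ?t" by (rule measure_le_Val[OF strategy_shift[OF \<sigma>]])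
  also have "\<dots> \<le> val_bound" by (rule val_bound_spec(3)[OF t])
  finally have bound: "measure (run_measure VM P ?\<sigma>' ?t) Ob_avoid \<le> val_bound" .
  have "measure (run_measure VM P \<sigma> s) (Ob_avoid \<inter> sstart UNIV h) =
      cyl_prob VM P \<sigma> s h * measure (run_measure VM P ?\<sigma>' ?t) Ob_avoid"
    using Ob_avoid_cyl[OF h avoid] measure_run_shift[OF h Ob_avoid_sets] by simp
  also have "\<dots> \<le> cyl_prob VM P \<sigma> s h * val_bound"
    using bound by (intro mult_left_mono cyl_prob_nonneg)
  finally show ?thesis by (simp add: measure_run_cyl mult.commute)
qed

lemma Ob_avoid_null:
  assumes \<sigma>: "strategy E VM \<sigma>"
  shows "measure (run_measure VM P \<sigma> s) Ob_avoid = 0"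
proof -
  interpret stream_finite_measure "run_measure VM P \<sigma> s"
    by (intro stream_finite_measure.intro stream_finite_measure_axioms.intro
        prob_space.finite_measure[OF prob_space_run_measure] sets_run_measure)
  show ?thesis
    using Ob_avoid_sets val_bound_spec(1,2) Ob_avoid_cyl_bound[OF \<sigma>]
    by (intro null_if_cylinder_bound) (auto simp: sets_run_measure)
qed

lemma Val_le_Val_Reach: "Val E VM P Ob s \<le> Val E VM P (Reach W) s"
proof (rule Val_le)
  fix \<sigma> assume \<sigma>: "strategy E VM \<sigma>"
  let ?M = "run_measure VM P \<sigma> s"
  interpret finite_measure ?M by (rule prob_space.finite_measure[OF prob_space_run_measure])
  have "measure ?M Ob \<le> measure ?M (Reach W \<union> Ob_avoid)"
    using Ob_avoid_sets Reach_sets Ob_sets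
    by (intro finite_measure_mono) (auto simp: Ob_avoid_def sets_run_measure)
  also have "\<dots> \<le> measure ?M (Reach W) + measure ?M Ob_avoid"
    using Ob_avoid_sets Reach_sets by (intro measure_Un_le) (auto simp: sets_run_measure)
  also have "\<dots> \<le> Val E VM P (Reach W) s"
    using Ob_avoid_null[OF \<sigma>] measure_le_Val[OF \<sigma>] by simp
  finally show "measure ?M Ob \<le> Val E VM P (Reach W) s" .
qed

subsubsection \<open>Reaching W suffices: switching strategies at the first visit\<close>

definition hits :: "'v list \<Rightarrow> bool" where
  "hits g \<longleftrightarrow> (\<exists>k<length g. g ! k \<in> W)"

definition first_hit :: "'v list \<Rightarrow> nat" where
  "first_hit g = (LEAST k. k < length g \<and> g ! k \<in> W)"

definition first_hits :: "'v list set" where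
  "first_hits = {h. h \<noteq> [] \<and> last h \<in> W \<and> (\<forall>i<length h - 1. h ! i \<notin> W)}"

lemma first_hit_spec:
  assumes "hits g"
  shows "first_hit g < length g" "g ! first_hit g \<in> W"
  using LeastI_ex[of "\<lambda>k. k < length g \<and> g ! k \<in> W"] assms by (auto simp: hits_def first_hit_def)

lemma first_hit_eq:
  assumes "k < length g" "g ! k \<in> W" "\<And>i. i < k \<Longrightarrow> g ! i \<notin> W"
  shows "first_hit g = k"
  unfolding first_hit_def
proof (rule Least_equality)
  show "k < length g \<and> g ! k \<in> W" using assms by simp
  show "\<And>y. y < length g \<and> g ! y \<in> W \<Longrightarrow> k \<le> y" using assms(3) by (meson not_le)
qed

lemma Reach_first_hits: "Reach W = (\<Union>h\<in>first_hits. sstart UNIV h)"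
proof (intro set_eqI iffI)
  fix \<omega> assume "\<omega> \<in> Reach W"
  then have ex: "\<exists>i. \<omega> !! i \<in> W" by (auto simp: Reach_def)
  define k where "k = (LEAST k. \<omega> !! k \<in> W)"
  have "\<omega> !! k \<in> W" using LeastI_ex[OF ex] by (simp add: k_def)
  moreover have "j < k \<Longrightarrow> \<omega> !! j \<notin> W" for j unfolding k_def by (rule not_less_Least)
  ultimately have "stake (Suc k) \<omega> \<in> first_hits"
    by (auto simp: first_hits_def last_conv_nth simp del: stake.simps)
  moreover have "\<omega> \<in> sstart UNIV (stake (Suc k) \<omega>)" by (simp add: sstart_UNIV del: stake.simps)
  ultimately show "\<omega> \<in> (\<Union>h\<in>first_hits. sstart UNIV h)" by blast
next
  fix \<omega> assume "\<omega> \<in> (\<Union>h\<in>first_hits. sstart UNIV h)"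
  then obtain h where h: "h \<in> first_hits" "\<omega> \<in> sstart UNIV h" by blast
  then have "\<omega> !! (length h - 1) = last h" by (auto simp: sstart_eq first_hits_def last_conv_nth)
  then have "\<omega> !! (length h - 1) \<in> W" using h(1) by (simp add: first_hits_def)
  then show "\<omega> \<in> Reach W" by (auto simp: Reach_def)
qed

lemma first_hits_prefix_free:
  assumes h1: "h1 \<in> first_hits" and h2: "h2 \<in> first_hits" and prefix: "take (length h1) h2 = h1"
  shows "h1 = h2"
proof (rule ccontr)
  assume "h1 \<noteq> h2"
  then have less: "length h1 < length h2" using prefix by (metis not_less take_all)
  have ne: "h1 \<noteq> []" and last: "last h1 \<in> W" using h1 by (auto simp: first_hits_def)
  have "h2 ! (length h1 - 1) = take (length h1) h2 ! (length h1 - 1)"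
    using ne by (cases h1) simp_all
  also have "\<dots> = last h1" using prefix ne by (simp add: last_conv_nth)
  finally have "h2 ! (length h1 - 1) \<in> W" using last by simp
  moreover have "length h1 - 1 < length h2 - 1" using less ne by (cases h1) auto
  ultimately show False using h2 by (auto simp: first_hits_def)
qed

definition switch :: "('v \<Rightarrow> 'v list \<Rightarrow> 'v pmf) \<Rightarrow> ('v list \<Rightarrow> 'v pmf) \<Rightarrow> 'v list \<Rightarrow> 'v pmf" where
  "switch \<tau> \<sigma> g = (if hits g then \<tau> (g ! first_hit g) (drop (first_hit g) g) else \<sigma> g)"

lemma switch_strategy:
  assumes \<tau>: "\<forall>t\<in>W. strategy E VM (\<tau> t)" and \<sigma>: "strategy E VM \<sigma>"
  shows "strategy E VM (switch \<tau> \<sigma>)"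
  unfolding strategy_def
proof (intro allI impI)
  fix g assume g: "g \<noteq> [] \<and> last g \<in> VM"
  show "set_pmf (switch \<tau> \<sigma> g) \<subseteq> E `` {last g}"
  proof (cases "hits g")
    case True
    have "drop (first_hit g) g \<noteq> []" "last (drop (first_hit g) g) = last g"
      using first_hit_spec(1)[OF True] by simp_all
    moreover have "strategy E VM (\<tau> (g ! first_hit g))" using \<tau> first_hit_spec(2)[OF True] by blast
    ultimately have "set_pmf (\<tau> (g ! first_hit g) (drop (first_hit g) g)) \<subseteq> E `` {last g}"
      using g unfolding strategy_def by metis
    then show ?thesis using True by (simp add: switch_def)
  next
    case False
    then show ?thesis using \<sigma> g by (auto simp: switch_def strategy_def)
  qed
qed

lemma cyl_prob_switch:
  assumes h: "h \<in> first_hits"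
  shows "cyl_prob VM P (switch \<tau> \<sigma>) s h = cyl_prob VM P \<sigma> s h"
proof -
  have "\<not> hits (take (Suc i) h)" if i: "i < length h - 1" for i
  proof
    assume "hits (take (Suc i) h)"
    then obtain k where "k < length (take (Suc i) h)" "take (Suc i) h ! k \<in> W" by (auto simp: hits_def)
    then have "k < length h - 1" "h ! k \<in> W" using i by auto
    then show False using h by (auto simp: first_hits_def)
  qed
  then have "path_prob VM P (switch \<tau> \<sigma>) h = path_prob VM P \<sigma> h"
    unfolding path_prob_def next_dist_def switch_def by (intro prod.cong) auto
  then show ?thesis by (simp add: cyl_prob_def)
qed

lemma switch_after:
  assumes h: "h \<in> first_hits" and g: "g \<noteq> []" "hd g = last h"
  shows "switch \<tau> \<sigma> (butlast h @ g) = \<tau> (last h) g"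
proof -
  let ?k = "length (butlast h)"
  have W: "last h \<in> W" and before: "\<forall>i<length h - 1. h ! i \<notin> W" using h by (auto simp: first_hits_def)
  have at: "(butlast h @ g) ! ?k = last h" using g by (simp add: nth_append hd_conv_nth)
  have k: "?k < length (butlast h @ g)" using g by simp
  have "hits (butlast h @ g)" unfolding hits_def using k at W by metis
  moreover have "first_hit (butlast h @ g) = ?k"
    by (rule first_hit_eq[OF k]) (use at W before in \<open>auto simp: nth_append nth_butlast\<close>)
  ultimately show ?thesis using at by (simp add: switch_def)
qed

lemma switch_cyl_bound:
  assumes \<tau>: "\<forall>t\<in>W. z < measure (run_measure VM P (\<tau> t) t) Ob" and h: "h \<in> first_hits"
  shows "ennreal z * emeasure (run_measure VM P \<sigma> s) (sstart UNIV h) \<le>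
    emeasure (run_measure VM P (switch \<tau> \<sigma>) s) (Ob \<inter> sstart UNIV h)"
proof -
  have ne: "h \<noteq> []" and W: "last h \<in> W" using h by (auto simp: first_hits_def)
  have "run_measure VM P (\<lambda>l. switch \<tau> \<sigma> (butlast h @ l)) (last h) = run_measure VM P (\<tau> (last h)) (last h)"
    by (rule run_measure_cong) (use switch_after[OF h] in auto)
  moreover have "Ob \<inter> sstart UNIV h = sstart UNIV h \<inter> sdrop (length h - 1) -` Ob"
    using Ob_sdrop[of _ "length h - 1"] by blast
  ultimately have eq: "emeasure (run_measure VM P (switch \<tau> \<sigma>) s) (Ob \<inter> sstart UNIV h) =
      ennreal (cyl_prob VM P \<sigma> s h) * emeasure (run_measure VM P (\<tau> (last h)) (last h)) Ob"
    using run_shift[OF ne Ob_sets, of VM P "switch \<tau> \<sigma>" s] cyl_prob_switch[OF h] by simp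
  have "ennreal z \<le> ennreal (measure (run_measure VM P (\<tau> (last h)) (last h)) Ob)"
    using \<tau> W by (intro ennreal_leI less_imp_le) auto
  then have "ennreal z \<le> emeasure (run_measure VM P (\<tau> (last h)) (last h)) Ob"
    by (simp only: emeasure_run_eq_measure)
  then have "ennreal (cyl_prob VM P \<sigma> s h) * ennreal z \<le>
      ennreal (cyl_prob VM P \<sigma> s h) * emeasure (run_measure VM P (\<tau> (last h)) (last h)) Ob"
    by (rule mult_left_mono) simp
  then show ?thesis by (simp add: eq emeasure_run_cyl mult.commute)
qed

lemma switch_bound:
  assumes \<tau>: "\<forall>t\<in>W. z < measure (run_measure VM P (\<tau> t) t) Ob" and z: "0 < z"
  shows "z * measure (run_measure VM P \<sigma> s) (Reach W) \<le> measure (run_measure VM P (switch \<tau> \<sigma>) s) Ob"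
proof -
  let ?M = "run_measure VM P \<sigma> s" and ?M' = "run_measure VM P (switch \<tau> \<sigma>) s"
  have countable: "countable first_hits" by (rule countable_subset[OF subset_UNIV]) simp
  have disj: "disjoint_family_on (\<lambda>h. X \<inter> sstart UNIV h) first_hits" for X
    by (rule sstart_disjoint_family) (rule first_hits_prefix_free)
  have "ennreal z * emeasure ?M (Reach W) = ennreal z * (\<integral>\<^sup>+h. emeasure ?M (UNIV \<inter> sstart UNIV h) \<partial>count_space first_hits)"
    unfolding Reach_first_hits
    using emeasure_UN_countable[OF _ countable disj[of UNIV], of ?M] by (simp add: sets_run_measure sstart_sets)
  also have "\<dots> = (\<integral>\<^sup>+h. ennreal z * emeasure ?M (sstart UNIV h) \<partial>count_space first_hits)"
    by (simp add: nn_integral_cmult)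
  also have "\<dots> \<le> (\<integral>\<^sup>+h. emeasure ?M' (Ob \<inter> sstart UNIV h) \<partial>count_space first_hits)"
    by (intro nn_integral_mono) (use switch_cyl_bound[OF \<tau>] in auto)
  also have "\<dots> = emeasure ?M' (\<Union>h\<in>first_hits. Ob \<inter> sstart UNIV h)"
    using emeasure_UN_countable[OF _ countable disj[of Ob], of ?M'] Ob_sets
    by (simp add: sets_run_measure sstart_sets sets.Int)
  also have "\<dots> \<le> emeasure ?M' Ob"
    by (rule emeasure_mono) (auto simp: sets_run_measure Ob_sets)
  finally have "ennreal (z * measure ?M (Reach W)) \<le> ennreal (measure ?M' Ob)"
    by (simp only: emeasure_run_eq_measure ennreal_mult[OF less_imp_le[OF z] measure_nonneg])
  then show ?thesis by (simp add: ennreal_le_iff)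
qed

text \<open>Letting z tend to 1 gives the reverse inequality.\<close>
lemma Val_Reach_le_Val: "Val E VM P (Reach W) s \<le> Val E VM P Ob s"
proof (rule field_le_mult_one_interval)
  fix z :: real assume z: "0 < z" "z < 1"
  have "\<forall>t\<in>W. \<exists>\<tau>. strategy E VM \<tau> \<and> z < measure (run_measure VM P \<tau> t) Ob"
  proof
    fix t assume "t \<in> W"
    then have "z < Val E VM P Ob t" using z(2) by (simp add: W_def)
    then show "\<exists>\<tau>. strategy E VM \<tau> \<and> z < measure (run_measure VM P \<tau> t) Ob"
      by (rule less_Val_imp_strategy)
  qed
  from bchoice[OF this] obtain \<tau>
    where \<tau>: "\<forall>t\<in>W. strategy E VM (\<tau> t) \<and> z < measure (run_measure VM P (\<tau> t) t) Ob"
    by blast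
  have "Val E VM P (Reach W) s \<le> Val E VM P Ob s / z"
  proof (rule Val_le)
    fix \<sigma> assume \<sigma>: "strategy E VM \<sigma>"
    have "z * measure (run_measure VM P \<sigma> s) (Reach W) \<le> measure (run_measure VM P (switch \<tau> \<sigma>) s) Ob"
      by (rule switch_bound) (use \<tau> z(1) in simp_all)
    also have "\<dots> \<le> Val E VM P Ob s"
      by (rule measure_le_Val, rule switch_strategy) (use \<tau> \<sigma> in simp_all)
    finally show "measure (run_measure VM P \<sigma> s) (Reach W) \<le> Val E VM P Ob s / z"
      using z(1) by (simp add: field_simps)
  qed
  then show "z * Val E VM P (Reach W) s \<le> Val E VM P Ob s" using z(1) by (simp add: field_simps)
qed

theorem Val_eq_Val_Reach: "Val E VM P Ob s = Val E VM P (Reach W) s"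
  using Val_le_Val_Reach Val_Reach_le_Val by (rule order.antisym)

end

subsection \<open>LimInf objectives\<close>

lemma liminf_partial_sums_stl:
  fixes r :: "'v \<Rightarrow> int"
  shows "liminf (\<lambda>n. ereal (real_of_int (\<Sum>i\<le>n. r (w !! i)))) =
    ereal (real_of_int (r (w !! 0))) + liminf (\<lambda>n. ereal (real_of_int (\<Sum>i\<le>n. r (stl w !! i))))"
proof -
  let ?f = "\<lambda>n. ereal (real_of_int (\<Sum>i\<le>n. r (w !! i)))"
  have "liminf ?f = liminf (\<lambda>n. ?f (n + 1))"
    by (rule liminf_shift[symmetric])
  also have "(\<lambda>n. ?f (n + 1)) =
      (\<lambda>n. ereal (real_of_int (r (w !! 0))) + ereal (real_of_int (\<Sum>i\<le>n. r (stl w !! i))))"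
    by (simp add: sum.atMost_Suc_shift del: sum.atMost_Suc)
  also have "liminf \<dots> = ereal (real_of_int (r (w !! 0))) + liminf (\<lambda>n. ereal (real_of_int (\<Sum>i\<le>n. r (stl w !! i))))"
    by (rule Liminf_add_ereal_left) auto
  finally show ?thesis .
qed

text \<open>Comparing a liminf with an infinite bound is insensitive to finite shifts, so the four
  LimInf objectives are tail objectives.\<close>
lemma LimInf_tail:
  fixes r :: "'v \<Rightarrow> int"
  assumes "\<Delta> \<in> {(=), (\<lambda>x y. x > y), (\<lambda>x y. x < y)}" and "z \<in> {-\<infinity>, \<infinity>}"
  shows "\<omega> \<in> LimInf r \<Delta> z \<longleftrightarrow> stl \<omega> \<in> LimInf r \<Delta> z"
proof -
  define x where "x = liminf (\<lambda>n. ereal (real_of_int (\<Sum>i\<le>n. r (stl \<omega> !! i))))"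
  have "\<Delta> (ereal c + x) z \<longleftrightarrow> \<Delta> x z" for c
    using assms by (cases x) auto
  then show ?thesis
    unfolding LimInf_def using liminf_partial_sums_stl[of r \<omega>] by (simp add: x_def)
qed

lemma measurable_liminf_partial_sums:
  fixes r :: "'v::countable \<Rightarrow> int"
  shows "(\<lambda>w. liminf (\<lambda>n. ereal (real_of_int (\<Sum>i\<le>n. r (w !! i))))) \<in> borel_measurable (stream_space (count_space UNIV))"
proof -
  have [measurable]: "(\<lambda>x. real_of_int (r (x !! i))) \<in> borel_measurable (stream_space (count_space UNIV))" for i
    by (rule measurable_compose[OF measurable_snth]) simp
  show ?thesis unfolding of_int_sum by measurable
qed

lemma LimInf_sets:
  fixes r :: "'v::countable \<Rightarrow> int"
  assumes "{x. \<Delta> x z} \<in> sets borel"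
  shows "LimInf r \<Delta> z \<in> sets (stream_space (count_space UNIV))"
  using measurable_sets[OF measurable_liminf_partial_sums assms, of r]
  by (simp add: LimInf_def space_stream_space vimage_def)

lemma LimInf_tail_objective:
  fixes r :: "'v::countable \<Rightarrow> int"
  assumes Obj: "Obj \<in> {LimInf r (=) (-\<infinity>), LimInf r (\<lambda>x y. x > y) (-\<infinity>),
              LimInf r (=) \<infinity>, LimInf r (\<lambda>x y. x < y) \<infinity>}"
  shows "\<forall>\<omega>. \<omega> \<in> Obj \<longleftrightarrow> stl \<omega> \<in> Obj" and "Obj \<in> sets (stream_space (count_space UNIV))"
proof -
  have borel_eq: "{x. x = c} \<in> sets borel" for c :: ereal
    using borel_closed[OF closed_singleton, of c] by simp
  have borel_greater: "{x. x > (-\<infinity>::ereal)} \<in> sets borel"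
    using borel_open[OF open_greaterThan, of "-\<infinity>::ereal"] by (simp add: greaterThan_def)
  have borel_less: "{x. x < (\<infinity>::ereal)} \<in> sets borel"
    using borel_open[OF open_lessThan, of "\<infinity>::ereal"] by (simp add: lessThan_def)
  obtain \<Delta> z where Obj_eq: "Obj = LimInf r \<Delta> z"
    and \<Delta>: "\<Delta> \<in> {(=), (\<lambda>x y. x > y), (\<lambda>x y. x < y)}" and z: "z \<in> {-\<infinity>, \<infinity>}"
    and borel: "{x. \<Delta> x z} \<in> sets borel"
  proof -
    consider "Obj = LimInf r (=) (-\<infinity>)" | "Obj = LimInf r (\<lambda>x y. x > y) (-\<infinity>)"
      | "Obj = LimInf r (=) \<infinity>" | "Obj = LimInf r (\<lambda>x y. x < y) \<infinity>"
      using Obj by blast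
    then show ?thesis
    proof cases
      case 1
      then show ?thesis using borel_eq by (intro that[of "(=)" "-\<infinity>"]) simp_all
    next
      case 2
      then show ?thesis using borel_greater by (intro that[of "\<lambda>x y. x > y" "-\<infinity>"]) simp_all
    next
      case 3
      then show ?thesis using borel_eq by (intro that[of "(=)" "\<infinity>"]) simp_all
    next
      case 4
      then show ?thesis using borel_less by (intro that[of "\<lambda>x y. x < y" "\<infinity>"]) simp_all
    qed
  qed
  show "\<forall>\<omega>. \<omega> \<in> Obj \<longleftrightarrow> stl \<omega> \<in> Obj"
    unfolding Obj_eq by (intro allI LimInf_tail[OF \<Delta> z])
  show "Obj \<in> sets (stream_space (count_space UNIV))"
    unfolding Obj_eq using borel by (rule LimInf_sets)
qed

theorem mainTheorem7:
  fixes E :: "('v::finite \<times> 'v) set" and VM :: "'v set" and P :: "'v \<Rightarrow> 'v pmf"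
    and r :: "'v \<Rightarrow> int" and Obj :: "'v stream set"
  assumes "mdp E VM P"
    and "\<forall>v. r v \<in> {-1, 0, 1}"
    and "Obj \<in> {LimInf r (=) (-\<infinity>), LimInf r (\<lambda>x y. x > y) (-\<infinity>),
              LimInf r (=) \<infinity>, LimInf r (\<lambda>x y. x < y) \<infinity>}"
  shows "\<forall>s. Val E VM P Obj s = Val E VM P (Reach {t. Val E VM P Obj t = 1}) s"
proof -
  interpret tail_objective E VM P Obj
    by (intro tail_objective.intro finite_mdp.intro tail_objective_axioms.intro
        assms(1) LimInf_tail_objective[OF assms(3)])
  show ?thesis using Val_eq_Val_Reach[unfolded W_def] by blast
qed

end
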